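(* For all integers $0\le a<t\le T$, \[ G_a^{\lambda\mid t}=G_a^{\lambda\mid a+1}+\sum_{b=a+1}^{t-1}(\gamma\lambda)^{b-a}\,\delta'_{a,b}, \] where for $a\le b\le T-1$, $\delta'_{a,b}=\frac{\partial L_{b+1}}{\partial h_a}+\gamma\, g(h_{b+1};\theta_b)^\top\frac{\partial h_{b+1}}{\partial h_a}-g(h_b;\theta_{b-1})^\top\frac{\partial h_b}{\partial h_a}$.
   Context: Fix integers $d,p,T\ge1$. Hidden states $h_0,\dots,h_T\in\mathbb{R}^d$ are produced by a recurrent network $h_t=f(x_t,h_{t-1})$ with $f$ differentiable and inputs fixed; losses $L_t=\ell_t(h_t)$, $1\le t\le T$, with $\ell_t$ differentiable. For $0\le s\le\tau\le T$, $\partial h_\tau/\partial h_s\in\mathbb{R}^{d\times d}$ is the Jacobian of $h_\tau$ as a function of $h_s$ through the recursion (identity if $\tau=s$); for $s<\tau$, $\partial L_\tau/\partial h_s\in\mathbb{R}^d$ is the gradient of $L_\tau$ as a function of $h_s$; for $v\in\mathbb{R}^d$, $v^\top\partial h_\tau/\partial h_s$ means $(\partial h_\tau/\partial h_s)^\top v$. Let $g:\mathbb{R}^d\times\mathbb{R}^p\to\mathbb{R}^d$ be any map (the synthesiser), $\gamma,\lambda\in[0,1]$, and let $\theta_{-1},\theta_0,\dots,\theta_{T-1}\in\mathbb{R}^p$ be an arbitrary sequence of weight vectors. Convention $0^0=1$. The $n$-step synthetic gradient, for $k\ge0$, $n\ge1$, $k+n\le T$, is $G_k^{(n)}=\sum_{\tau=1}^{n}\gamma^{\tau-1}\frac{\partial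 L_{k+\tau}}{\partial h_k}+\gamma^n g(h_{k+n};\theta_{k+n-1})^\top\frac{\partial h_{k+n}}{\partial h_k}$, and the interim $\lambda$-weighted synthetic gradient, for $0\le k<H\le T$, is $G_k^{\lambda\mid H}=(1-\lambda)\sum_{n=1}^{H-k-1}\lambda^{n-1}G_k^{(n)}+\lambda^{H-k-1}G_k^{(H-k)}$. An empty sum is zero. *)

theory Defs
  imports "HOL-Analysis.Analysis"
begin

primrec hs :: "('x \<Rightarrow> real^'d \<Rightarrow> real^'d) \<Rightarrow> (nat \<Rightarrow> 'x) \<Rightarrow> real^'d \<Rightarrow> nat \<Rightarrow> real^'d" where
  "hs f x h0 0 = h0"
| "hs f x h0 (Suc t) = f (x (Suc t)) (hs f x h0 t)"

primrec flow :: "('x \<Rightarrow> real^'d \<Rightarrow> real^'d) \<Rightarrow> (nat \<Rightarrow> 'x) \<Rightarrow> nat \<Rightarrow> nat \<Rightarrow> real^'d \<Rightarrow> real^'d" where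
  "flow f x s 0 v = v"
| "flow f x s (Suc n) v = f (x (s + Suc n)) (flow f x s n v)"

definition dh :: "('x \<Rightarrow> real^'d \<Rightarrow> real^'d) \<Rightarrow> (nat \<Rightarrow> 'x) \<Rightarrow> real^'d \<Rightarrow> nat \<Rightarrow> nat \<Rightarrow> real^'d^'d" where
  "dh f x h0 tau s = jacobian (flow f x s (tau - s)) (at (hs f x h0 s))"

definition grad :: "(real^'d \<Rightarrow> real) \<Rightarrow> real^'d \<Rightarrow> real^'d" where
  "grad F z = (\<chi> i. frechet_derivative F (at z) (axis i 1))"

definition dL :: "('x \<Rightarrow> real^'d \<Rightarrow> real^'d) \<Rightarrow> (nat \<Rightarrow> 'x) \<Rightarrow> real^'d \<Rightarrow> (nat \<Rightarrow> real^'d \<Rightarrow> real) \<Rightarrow> nat \<Rightarrow> nat \<Rightarrow> real^'d" where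
  "dL f x h0 l tau s = grad (\<lambda>v. l tau (flow f x s (tau - s) v)) (hs f x h0 s)"

text \<open>n-step synthetic gradient G_k^(n).  The weights theta are indexed by
  integers (only theta_{-1},...,theta_{T-1} are ever used).  The product
  v^T (d h_tau/d h_s) is the row vector v v* J.\<close>

definition Gn :: "('x \<Rightarrow> real^'d \<Rightarrow> real^'d) \<Rightarrow> (nat \<Rightarrow> 'x) \<Rightarrow> real^'d \<Rightarrow> (nat \<Rightarrow> real^'d \<Rightarrow> real)
   \<Rightarrow> (real^'d \<Rightarrow> real^'p \<Rightarrow> real^'d) \<Rightarrow> (int \<Rightarrow> real^'p) \<Rightarrow> real \<Rightarrow> nat \<Rightarrow> nat \<Rightarrow> real^'d" where
  "Gn f x h0 l g \<theta> \<gamma> k n =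
     (\<Sum>\<tau>=1..n. \<gamma>^(\<tau>-1) *\<^sub>R dL f x h0 l (k+\<tau>) k)
     + \<gamma>^n *\<^sub>R (g (hs f x h0 (k+n)) (\<theta> (int (k+n) - 1)) v* dh f x h0 (k+n) k)"

definition Glam :: "('x \<Rightarrow> real^'d \<Rightarrow> real^'d) \<Rightarrow> (nat \<Rightarrow> 'x) \<Rightarrow> real^'d \<Rightarrow> (nat \<Rightarrow> real^'d \<Rightarrow> real)
   \<Rightarrow> (real^'d \<Rightarrow> real^'p \<Rightarrow> real^'d) \<Rightarrow> (int \<Rightarrow> real^'p) \<Rightarrow> real \<Rightarrow> real \<Rightarrow> nat \<Rightarrow> nat \<Rightarrow> real^'d" where
  "Glam f x h0 l g \<theta> \<gamma> lam k H =
     (1 - lam) *\<^sub>R (\<Sum>n=1..H-k-1. lam^(n-1) *\<^sub>R Gn f x h0 l g \<theta> \<gamma> k n)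
     + lam^(H-k-1) *\<^sub>R Gn f x h0 l g \<theta> \<gamma> k (H-k)"

definition delta' :: "('x \<Rightarrow> real^'d \<Rightarrow> real^'d) \<Rightarrow> (nat \<Rightarrow> 'x) \<Rightarrow> real^'d \<Rightarrow> (nat \<Rightarrow> real^'d \<Rightarrow> real)
   \<Rightarrow> (real^'d \<Rightarrow> real^'p \<Rightarrow> real^'d) \<Rightarrow> (int \<Rightarrow> real^'p) \<Rightarrow> real \<Rightarrow> nat \<Rightarrow> nat \<Rightarrow> real^'d" where
  "delta' f x h0 l g \<theta> \<gamma> a b =
     dL f x h0 l (b+1) a
     + \<gamma> *\<^sub>R (g (hs f x h0 (b+1)) (\<theta> (int b)) v* dh f x h0 (b+1) a)
     - (g (hs f x h0 b) (\<theta> (int b - 1)) v* dh f x h0 b a)"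

end

theory Submission
  imports Defs
begin

(* Each extra lookahead step changes the n-step synthetic gradient by a discounted
   TD-like error, G_a^(n+1) = G_a^(n) + gamma^n delta'_{a,a+n}. Feeding this into the
   geometric lambda-mixture and summing by parts telescopes the mixture into G_a^(1)
   plus the (gamma lambda)-discounted errors. *)

lemma lambda_mixture_telescope:
  fixes G D :: "nat \<Rightarrow> 'v::real_vector" and \<gamma> lam :: real
  assumes step: "\<And>n. G (Suc n) = G n + \<gamma>^n *\<^sub>R D n"
  shows "(1 - lam) *\<^sub>R (\<Sum>n=1..N. lam^(n-1) *\<^sub>R G n) + lam^N *\<^sub>R G (Suc N)
         = G 1 + (\<Sum>m=1..N. (\<gamma>*lam)^m *\<^sub>R D m)"
proof (induction N)
  case 0
  then show ?case by simp
next
  case (Suc N)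
  have "(1 - lam) *\<^sub>R (\<Sum>n=1..Suc N. lam^(n-1) *\<^sub>R G n) + lam^(Suc N) *\<^sub>R G (Suc (Suc N))
      = ((1 - lam) *\<^sub>R (\<Sum>n=1..N. lam^(n-1) *\<^sub>R G n) + lam^N *\<^sub>R G (Suc N))
        + lam^(Suc N) *\<^sub>R (G (Suc (Suc N)) - G (Suc N))"
    by (simp add: algebra_simps)
  also have "\<dots> = G 1 + (\<Sum>m=1..N. (\<gamma>*lam)^m *\<^sub>R D m) + (\<gamma>*lam)^(Suc N) *\<^sub>R D (Suc N)"
    using Suc.IH step[of "Suc N"] by (simp add: power_mult_distrib)
  finally show ?case by simp
qed

lemma Gn_Suc:
  "Gn f x h0 l g \<theta> \<gamma> a (Suc n)
     = Gn f x h0 l g \<theta> \<gamma> a n + \<gamma>^n *\<^sub>R delta' f x h0 l g \<theta> \<gamma> a (a+n)"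
proof -
  have "int (a + Suc n) - 1 = int (a + n)" by simp
  moreover have "S + \<gamma>^n *\<^sub>R B + \<gamma>^(Suc n) *\<^sub>R X1
      = (S + \<gamma>^n *\<^sub>R X0) + \<gamma>^n *\<^sub>R (B + \<gamma> *\<^sub>R X1 - X0)" for S B X0 X1 :: "real^'d"
    by (simp add: algebra_simps)
  ultimately show ?thesis
    unfolding Gn_def delta'_def by (simp add: add.assoc)
qed

theorem lemma2:
  fixes f :: "'x \<Rightarrow> real^'d \<Rightarrow> real^'d" and x :: "nat \<Rightarrow> 'x" and h0 :: "real^'d"
    and l :: "nat \<Rightarrow> real^'d \<Rightarrow> real"
    and g :: "real^'d \<Rightarrow> real^'p \<Rightarrow> real^'d" and \<theta> :: "int \<Rightarrow> real^'p"
    and \<gamma> lam :: real and T a t :: nat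
  assumes "T \<ge> 1"
    and "\<And>s h. f (x s) differentiable (at h)"
    and "\<And>s h. 1 \<le> s \<Longrightarrow> s \<le> T \<Longrightarrow> l s differentiable (at h)"
    and "0 \<le> \<gamma>" and "\<gamma> \<le> 1" and "0 \<le> lam" and "lam \<le> 1"
    and "a < t" and "t \<le> T"
  shows "Glam f x h0 l g \<theta> \<gamma> lam a t =
           Glam f x h0 l g \<theta> \<gamma> lam a (a+1)
           + (\<Sum>b=a+1..t-1. (\<gamma>*lam)^(b-a) *\<^sub>R delta' f x h0 l g \<theta> \<gamma> a b)"
proof -
  define G where "G n = Gn f x h0 l g \<theta> \<gamma> a n" for n
  define D where "D m = delta' f x h0 l g \<theta> \<gamma> a (a+m)" for m
  obtain N where t: "t = a + Suc N"
    using \<open>a < t\<close> less_iff_Suc_add by auto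
  have "Glam f x h0 l g \<theta> \<gamma> lam a t
      = (1 - lam) *\<^sub>R (\<Sum>n=1..N. lam^(n-1) *\<^sub>R G n) + lam^N *\<^sub>R G (Suc N)"
    unfolding Glam_def G_def t by simp
  also have "\<dots> = G 1 + (\<Sum>m=1..N. (\<gamma>*lam)^m *\<^sub>R D m)"
    by (rule lambda_mixture_telescope) (simp add: G_def D_def Gn_Suc)
  also have "(\<Sum>m=1..N. (\<gamma>*lam)^m *\<^sub>R D m)
      = (\<Sum>b=a+1..t-1. (\<gamma>*lam)^(b-a) *\<^sub>R delta' f x h0 l g \<theta> \<gamma> a b)"
    unfolding t D_def
    by (rule sum.reindex_bij_witness[where i = "\<lambda>b. b - a" and j = "\<lambda>m. a + m"]) auto
  also have "G 1 = Glam f x h0 l g \<theta> \<gamma> lam a (a+1)"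
    unfolding Glam_def G_def by simp
  finally show ?thesis .
qed

end
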